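(* Let $n\geq 2$. Let $M$ be the $0/1$ matrix whose rows are indexed by the derangements $\pi$ of $\{1,\dots,n\}$, whose columns are indexed by the ordered pairs $(i,j)$ with $i,j\in\{1,\dots,n-1\}$ and $i\neq j$, and whose $(\pi,(i,j))$-entry is $1$ iff $\pi(i)=j$. Then $M$ has rank $(n-1)(n-2)$.
   Context: A derangement of $\{1,\dots,n\}$ is a permutation with no fixed points. *)

theory Defs
  imports Complex_Main "HOL-Library.Function_Algebras" "HOL-Combinatorics.Permutations"
begin

definition derangements :: "nat \<Rightarrow> (nat \<Rightarrow> nat) set" where
  "derangements n = {p. p permutes {1..n} \<and> (\<forall>x\<in>{1..n}. p x \<noteq> x)}"

definition mat_rank :: "'r set \<Rightarrow> 'c set \<Rightarrow> ('r \<Rightarrow> 'c \<Rightarrow> real) \<Rightarrow> nat" where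
  "mat_rank R C M =
     vector_space.dim (\<lambda>a (f :: 'c \<Rightarrow> real) c. a * f c)
       ((\<lambda>r c. if c \<in> C then M r c else 0) ` R)"

end

(*
  Given a != b in {1..n-1}, take a derangement c of {1..n-1} with c a = b.  For every z, the
  permutation c o (z n), which inserts n into the cycle of c right after z, is a derangement of
  {1..n} whose row is S - e z, where e x is the unit vector at (x, c x) and S = sum of all e x.
  The n - 1 rows so obtained sum to (n - 2) S, so S and hence e a = unit vector at (a, b) lie in
  the row space.  Thus the rows span all (n-1)(n-2) coordinate vectors.
*)
theory Submission
  imports Defs "HOL-Library.Indicator_Function" "HOL-Combinatorics.Cycles"
begin

lemma sum_fun_apply: "(sum f A :: 'a \<Rightarrow> 'b::comm_monoid_add) x = (\<Sum>a\<in>A. f a x)"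
  by (induct A rule: infinite_finite_induct) auto

global_interpretation fun_vs: vector_space "\<lambda>a (f :: 'c \<Rightarrow> real) c. a * f c"
  by unfold_locales (auto simp: fun_eq_iff algebra_simps)

lemma (in vector_space) in_span_sum_minus:
  assumes "finite A" "a \<in> A" "of_nat (card A) \<noteq> (1 :: 'a)"
  shows "e a \<in> span ((\<lambda>z. sum e A - e z) ` A)"
proof -
  let ?S = "sum e A"
  have "(\<Sum>z\<in>A. ?S - e z) = scale (of_nat (card A) - 1) ?S"
    using scale_sum_left[of "\<lambda>_. 1" A ?S]
    by (simp add: sum_subtractf scale_left_diff_distrib)
  then have "?S = scale (inverse (of_nat (card A) - 1)) (\<Sum>z\<in>A. ?S - e z)"
    using assms(3) by simp
  also have "\<dots> \<in> span ((\<lambda>z. ?S - e z) ` A)"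
    by (intro span_scale span_sum span_base imageI)
  finally have "?S \<in> span ((\<lambda>z. ?S - e z) ` A)" .
  moreover have "?S - e a \<in> span ((\<lambda>z. ?S - e z) ` A)"
    using assms(2) by (intro span_base imageI)
  ultimately show ?thesis
    using span_diff by fastforce
qed

lemma fun_vs_independent_indicators:
  fixes C :: "'c set"
  shows "fun_vs.independent ((\<lambda>c. (indicator {c} :: 'c \<Rightarrow> real)) ` C)"
proof (unfold fun_vs.independent_explicit_module, clarify)
  fix T u v
  assume T: "finite T" "T \<subseteq> (\<lambda>c. indicator {c}) ` C" "v \<in> T"
    and combination: "(\<Sum>w\<in>T. (\<lambda>x. u w * w x)) = (0 :: 'c \<Rightarrow> real)"
  obtain c where v: "v = indicator {c}"
    using T(2,3) by blast
  have at_c: "w c = (if w = v then 1 else 0)" if "w \<in> T" for w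
    using that T(2) by (auto simp: v indicator_def fun_eq_iff)
  have "0 = (\<Sum>w\<in>T. u w * w c)"
    using fun_cong[OF combination, of c] by (simp add: sum_fun_apply)
  also have "\<dots> = (\<Sum>w\<in>T. if w = v then u w else 0)"
    by (intro sum.cong refl) (simp add: at_c)
  also have "\<dots> = u v"
    using T(1,3) by (simp add: sum.delta')
  finally show "u v = 0" ..
qed

lemma fun_vs_in_span_indicators:
  fixes v :: "'c \<Rightarrow> real"
  assumes "finite C" "\<And>c. c \<notin> C \<Longrightarrow> v c = 0"
  shows "v \<in> fun_vs.span ((\<lambda>c. indicator {c}) ` C)"
proof -
  have "(\<Sum>c\<in>C. v c * indicator {c} x) = v x" for x
  proof -
    have "(\<Sum>c\<in>C. v c * indicator {c} x) = (\<Sum>c\<in>C. if c = x then v c else 0)"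
      by (intro sum.cong refl) (simp add: indicator_def)
    also have "\<dots> = v x"
      using assms by (simp add: sum.delta')
    finally show ?thesis .
  qed
  then have "v = (\<Sum>c\<in>C. (\<lambda>x. v c * indicator {c} x))"
    by (simp add: fun_eq_iff sum_fun_apply)
  also have "\<dots> \<in> fun_vs.span ((\<lambda>c. indicator {c}) ` C)"
    by (intro fun_vs.span_sum fun_vs.span_scale fun_vs.span_base imageI)
  finally show ?thesis .
qed

lemma fun_vs_dim_eq_card:
  fixes V :: "('c \<Rightarrow> real) set"
  assumes "finite C" and supported: "\<And>v c. v \<in> V \<Longrightarrow> c \<notin> C \<Longrightarrow> v c = 0"
    and indicators: "\<And>c. c \<in> C \<Longrightarrow> indicator {c} \<in> fun_vs.span V"
  shows "fun_vs.dim V = card C"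
proof -
  let ?B = "(\<lambda>c. indicator {c} :: 'c \<Rightarrow> real) ` C"
  have "inj_on (\<lambda>c. indicator {c} :: 'c \<Rightarrow> real) C"
    by (rule inj_onI) (metis indicator_simps singletonD singletonI zero_neq_one)
  then have "card ?B = card C"
    by (rule card_image)
  moreover have "fun_vs.span V \<subseteq> fun_vs.span ?B"
    using fun_vs_in_span_indicators[OF assms(1)] supported
    by (intro fun_vs.span_minimal fun_vs.subspace_span) blast
  ultimately have "fun_vs.dim (fun_vs.span V) = card C"
    using indicators fun_vs_independent_indicators by (intro fun_vs.dim_unique) auto
  then show ?thesis
    by simp
qed

lemma mat_rank_eq_card_columns:
  assumes "finite C"
    and "\<And>c. c \<in> C \<Longrightarrow> indicator {c} \<in> fun_vs.span ((\<lambda>r c. if c \<in> C then M r c else 0) ` R)"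
  shows "mat_rank R C M = card C"
  unfolding mat_rank_def using assms by (intro fun_vs_dim_eq_card) auto

lemma cycle_of_list_Cons_Cons_first:
  assumes "distinct (a # b # cs)"
  shows "cycle_of_list (a # b # cs) a = b"
proof -
  have "cycle_of_list (b # cs) a = a"
    using assms by (intro id_outside_supp) simp
  then show ?thesis
    by simp
qed

lemma cycle_of_list_no_fixpoint:
  assumes "distinct cs" "2 \<le> length cs" "x \<in> set cs"
  shows "cycle_of_list cs x \<noteq> x"
proof -
  obtain k where k: "k < length cs" "x = cs ! k"
    using assms(3) by (metis in_set_conv_nth)
  have "map (cycle_of_list cs) cs = rotate1 cs"
    using cyclic_rotation[OF assms(1), of 1] by simp
  then have "cycle_of_list cs x = cs ! (Suc k mod length cs)"
    using k by (metis nth_map nth_rotate1)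
  moreover have "Suc k mod length cs \<noteq> k"
  proof (cases "Suc k < length cs")
    case False
    then have "Suc k = length cs"
      using k(1) by simp
    then show ?thesis
      using assms(2) by auto
  qed simp
  moreover have "Suc k mod length cs < length cs"
    using k(1) by (intro mod_less_divisor) linarith
  ultimately show ?thesis
    using k assms(1) by (simp add: nth_eq_iff_index_eq)
qed

lemma obtain_derangement_mapping:
  assumes "finite A" "a \<in> A" "b \<in> A" "a \<noteq> b"
  obtains c where "c permutes A" "\<forall>x\<in>A. c x \<noteq> x" "c a = b"
proof -
  obtain cs where cs: "distinct cs" "set cs = A - {a, b}"
    using assms(1) finite_distinct_list[of "A - {a, b}"] by blast
  define zs where "zs = a # b # cs"
  have zs: "distinct zs" "set zs = A" "2 \<le> length zs"
    using cs assms by (auto simp: zs_def)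
  show thesis
  proof
    show "cycle_of_list zs permutes A"
      using cycle_permutes zs(2) by metis
    show "\<forall>x\<in>A. cycle_of_list zs x \<noteq> x"
      using cycle_of_list_no_fixpoint[OF zs(1,3)] zs(2) by blast
    show "cycle_of_list zs a = b"
      using zs(1) unfolding zs_def by (rule cycle_of_list_Cons_Cons_first)
  qed
qed

lemma derangement_comp_transpose_fresh:
  assumes "c permutes A" "\<forall>x\<in>A. c x \<noteq> x" "\<omega> \<notin> A" "z \<in> A"
  shows "c \<circ> transpose z \<omega> permutes insert \<omega> A"
    and "\<forall>x\<in>insert \<omega> A. (c \<circ> transpose z \<omega>) x \<noteq> x"
proof -
  show "c \<circ> transpose z \<omega> permutes insert \<omega> A"
    using assms by (intro permutes_compose permutes_swap_id permutes_subset[OF assms(1)]) auto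
  show "\<forall>x\<in>insert \<omega> A. (c \<circ> transpose z \<omega>) x \<noteq> x"
    using assms permutes_not_in[OF assms(1) assms(3)] permutes_in_image[OF assms(1)]
    by (auto simp: transpose_def)
qed

lemma graph_comp_transpose_fresh:
  assumes "c permutes A" "\<forall>x\<in>A. c x \<noteq> x" "\<omega> \<notin> A" "z \<in> A"
  shows "{(i, j) \<in> A \<times> A - Id. (c \<circ> transpose z \<omega>) i = j} = (\<lambda>x. (x, c x)) ` (A - {z})"
  using assms permutes_in_image[OF assms(1)] by (auto simp: transpose_def)

lemma indicator_graph:
  assumes "finite B"
  shows "indicator ((\<lambda>x. (x, f x)) ` B) = (\<Sum>x\<in>B. indicator {(x, f x)})"
proof -
  have "(\<lambda>x. (x, f x)) ` B = (\<Union>x\<in>B. {(x, f x)})"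
    by blast
  then show ?thesis
    unfolding fun_eq_iff sum_fun_apply
    by (auto intro: indicator_UN_disjoint[OF assms] simp: disjoint_family_on_def)
qed

lemma indicator_in_span_derangement_rows:
  assumes ab: "a \<in> {1..m}" "b \<in> {1..m}" "a \<noteq> b"
  shows "indicator {(a, b)} \<in> fun_vs.span
           ((\<lambda>p. indicator {(i, j) \<in> {1..m} \<times> {1..m} - Id. p i = j}) ` derangements (Suc m))"
    (is "_ \<in> fun_vs.span (?row ` _)")
proof -
  let ?A = "{1..m}"
  obtain c where c: "c permutes ?A" "\<forall>x\<in>?A. c x \<noteq> x" "c a = b"
    using obtain_derangement_mapping[OF _ ab] by blast
  define e :: "nat \<Rightarrow> nat \<times> nat \<Rightarrow> real" where "e x = indicator {(x, c x)}" for x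
  have fresh: "Suc m \<notin> ?A" and insert_fresh: "insert (Suc m) ?A = {1..Suc m}"
    by auto
  have rows: "sum e ?A - e z \<in> ?row ` derangements (Suc m)" if z: "z \<in> ?A" for z
  proof
    let ?\<tau> = "c \<circ> transpose z (Suc m)"
    show "?\<tau> \<in> derangements (Suc m)"
      using derangement_comp_transpose_fresh[OF c(1,2) fresh z]
      unfolding derangements_def insert_fresh by blast
    have "?row ?\<tau> = indicator ((\<lambda>x. (x, c x)) ` (?A - {z}))"
      using graph_comp_transpose_fresh[OF c(1,2) fresh z] by simp
    also have "\<dots> = sum e (?A - {z})"
      by (simp add: indicator_graph e_def)
    also have "\<dots> = sum e ?A - e z"
      using z by (simp add: sum_diff1)
    finally show "sum e ?A - e z = ?row ?\<tau>" ..
  qed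
  have "e a \<in> fun_vs.span ((\<lambda>z. sum e ?A - e z) ` ?A)"
    using ab by (intro fun_vs.in_span_sum_minus) auto
  also have "\<dots> \<subseteq> fun_vs.span (?row ` derangements (Suc m))"
    using rows by (intro fun_vs.span_mono) blast
  finally show ?thesis
    by (simp add: e_def c(3))
qed

lemma card_off_diagonal:
  assumes "finite A"
  shows "card (A \<times> A - Id) = card A * (card A - 1)"
proof -
  have "A \<times> A - Id = A \<times> A - (\<lambda>x. (x, x)) ` A"
    by auto
  moreover have "card ((\<lambda>x. (x, x)) ` A) = card A"
    by (simp add: card_image inj_on_def)
  moreover have "(\<lambda>x. (x, x)) ` A \<subseteq> A \<times> A"
    by auto
  ultimately show ?thesis
    using assms by (simp add: card_Diff_subset card_cartesian_product diff_mult_distrib2)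
qed

theorem lemma10:
  fixes n :: nat
  assumes "n \<ge> 2"
  shows "mat_rank (derangements n) {(i, j). i \<in> {1..n-1} \<and> j \<in> {1..n-1} \<and> i \<noteq> j}
           (\<lambda>\<pi> (i, j). if \<pi> i = j then 1 else 0)
         = (n - 1) * (n - 2)"
proof -
  define m where "m = n - 1"
  have n: "n = Suc m"
    using assms by (simp add: m_def)
  define C where "C = {1..m} \<times> {1..m} - Id"
  define M :: "(nat \<Rightarrow> nat) \<Rightarrow> nat \<times> nat \<Rightarrow> real"
    where "M = (\<lambda>\<pi> (i, j). if \<pi> i = j then 1 else 0)"
  have rows: "(\<lambda>\<pi> c. if c \<in> C then M \<pi> c else 0) = (\<lambda>\<pi>. indicator {(i, j) \<in> C. \<pi> i = j})"
    by (auto simp: fun_eq_iff indicator_def M_def)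
  have "mat_rank (derangements n) C M = card C"
  proof (rule mat_rank_eq_card_columns)
    fix c
    assume "c \<in> C"
    then obtain a b where ab: "c = (a, b)" "a \<in> {1..m}" "b \<in> {1..m}" "a \<noteq> b"
      by (cases c) (auto simp: C_def)
    show "indicator {c} \<in> fun_vs.span ((\<lambda>\<pi> c. if c \<in> C then M \<pi> c else 0) ` derangements n)"
      unfolding rows unfolding C_def n ab(1) by (rule indicator_in_span_derangement_rows[OF ab(2-4)])
  qed (simp add: C_def)
  also have "card C = (n - 1) * (n - 2)"
    by (simp add: C_def card_off_diagonal m_def numeral_2_eq_2)
  moreover have "{(i, j). i \<in> {1..n-1} \<and> j \<in> {1..n-1} \<and> i \<noteq> j} = C"
    by (auto simp: C_def m_def)
  ultimately show ?thesis
    by (simp add: M_def)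
qed

end
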